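(* Let $N\ge1$, let $q\in(0,1)$, let $a_1,\ldots,a_N$ be nonzero real numbers which are either all positive or all negative, and let $\nu_1,\ldots,\nu_N$ be parameters. Let $f(w)$, $w\in\mathbb{C}$, be holomorphic and nonzero in a complex neighborhood of an interval of $\mathbb{R}$ containing $\{a_i,qa_i\}_{i=1}^N$, and set $G(a_1,\ldots,a_N):=f(a_1)\cdots f(a_N)$. Then $$\frac{\mathscr{D}_N G(a_1,\ldots,a_N)}{G(a_1,\ldots,a_N)}=-\frac{1}{2\pi i}\oint\Bigl(\prod_{i=1}^N\frac{a_i-\nu_iz}{a_i-z}\Bigr)\frac{f(qz)}{f(z)}\frac{dz}{z},$$ where the integration contour is positively oriented and encircles $a_1,\ldots,a_N$ but no other singularities of the integrand.
   Context: $\mathscr{T}_{q;x}$ denotes the $q$-shift operator $\mathscr{T}_{q;x}F(\ldots,x,\ldots)=F(\ldots,qx,\ldots)$. The operator $\mathscr{D}_N$ acts on functions of $a_1,\ldots,a_N,\nu_1,\ldots,\nu_N$ (and possibly further variables, which it does not affect) by $$\mathscr{D}_N=\sum_{r=1}^N(1-\nu_r)\Bigl(\prod_{1\le i\le N,\,i\ne r}\frac{a_i-\nu_ia_r}{a_i-a_r}\Bigr)\mathscr{T}_{q;a_r}\mathscr{T}_{q;\nu_r}.$$ *)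

theory Defs
  imports "HOL-Complex_Analysis.Complex_Analysis"
begin

definition qshift_a :: "complex \<Rightarrow> nat \<Rightarrow>
    ((nat \<Rightarrow> complex) \<Rightarrow> (nat \<Rightarrow> complex) \<Rightarrow> complex) \<Rightarrow>
    ((nat \<Rightarrow> complex) \<Rightarrow> (nat \<Rightarrow> complex) \<Rightarrow> complex)" where
  "qshift_a q r F = (\<lambda>a nu. F (a(r := q * a r)) nu)"

definition qshift_nu :: "complex \<Rightarrow> nat \<Rightarrow>
    ((nat \<Rightarrow> complex) \<Rightarrow> (nat \<Rightarrow> complex) \<Rightarrow> complex) \<Rightarrow>
    ((nat \<Rightarrow> complex) \<Rightarrow> (nat \<Rightarrow> complex) \<Rightarrow> complex)" where
  "qshift_nu q r F = (\<lambda>a nu. F a (nu(r := q * nu r)))"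

definition D_op :: "complex \<Rightarrow> nat \<Rightarrow>
    ((nat \<Rightarrow> complex) \<Rightarrow> (nat \<Rightarrow> complex) \<Rightarrow> complex) \<Rightarrow>
    ((nat \<Rightarrow> complex) \<Rightarrow> (nat \<Rightarrow> complex) \<Rightarrow> complex)" where
  "D_op q N F = (\<lambda>a nu. \<Sum>r\<in>{1..N}. (1 - nu r) *
      (\<Prod>i\<in>{1..N} - {r}. (a i - nu i * a r) / (a i - a r)) *
      qshift_a q r (qshift_nu q r F) a nu)"

definition Gprod :: "(complex \<Rightarrow> complex) \<Rightarrow> nat \<Rightarrow>
    (nat \<Rightarrow> complex) \<Rightarrow> (nat \<Rightarrow> complex) \<Rightarrow> complex" where
  "Gprod f N = (\<lambda>a nu. \<Prod>i\<in>{1..N}. f (a i))"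

end

theory Submission
  imports Defs "HOL-Computational_Algebra.Polynomial"
begin

text \<open>With \<open>g z = (\<Prod>i. a\<^sub>i - \<nu>\<^sub>i z) f(qz) / (f(z) z)\<close> the integrand is \<open>g z / \<Prod>i (a\<^sub>i - z)\<close>,
  and the contour separates the simple poles \<open>a\<^sub>r\<close> from the singularities of \<open>g\<close>. Decomposing
  \<open>1 / \<Prod>i (a\<^sub>i - z)\<close> into partial fractions and applying Cauchy's integral formula to each one,
  the integral equals \<open>-2\<pi>i \<Sum>\<^sub>r g(a\<^sub>r) / \<Prod>\<^bsub>i\<noteq>r\<^esub> (a\<^sub>i - a\<^sub>r)\<close>. The factor \<open>i = r\<close> of \<open>g(a\<^sub>r)\<close> is
  \<open>(1 - \<nu>\<^sub>r) a\<^sub>r\<close>, so the \<open>r\<close>-th summand is exactly the \<open>r\<close>-th term of \<open>\<D>\<^sub>N G / G\<close>, in which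
  all factors \<open>f(a\<^sub>i)\<close> with \<open>i \<noteq> r\<close> cancel.\<close>

lemma lagrange_basis_sum_eq_1:
  fixes A :: "'i \<Rightarrow> 'a :: field"
  assumes fin: "finite I" and ne: "I \<noteq> {}" and inj: "inj_on A I"
  shows "(\<Sum>r\<in>I. (\<Prod>i\<in>I-{r}. A i - z) / (\<Prod>i\<in>I-{r}. A i - A r)) = 1"
proof -
  define p where
    "p = (\<Sum>r\<in>I. smult (1 / (\<Prod>i\<in>I-{r}. A i - A r)) (\<Prod>i\<in>I-{r}. [:A i, -1:]))"
  have poly_p: "poly p x = (\<Sum>r\<in>I. (\<Prod>i\<in>I-{r}. A i - x) / (\<Prod>i\<in>I-{r}. A i - A r))" for x
    unfolding p_def by (simp add: poly_sum poly_prod)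
  have "degree p \<le> card I - 1"
    unfolding p_def
  proof (rule degree_sum_le[OF fin])
    fix r assume r: "r \<in> I"
    have "degree (\<Prod>i\<in>I-{r}. [:A i, -1:]) \<le> (\<Sum>i\<in>I-{r}. degree [:A i, -1:])"
      using degree_prod_sum_le[of "I-{r}" "\<lambda>i. [:A i, -1:]"] fin by (simp add: o_def)
    also have "\<dots> = card I - 1" using r fin by simp
    finally show "degree (smult (1 / (\<Prod>i\<in>I-{r}. A i - A r)) (\<Prod>i\<in>I-{r}. [:A i, -1:]))
        \<le> card I - 1"
      by (meson degree_smult_le le_trans)
  qed
  moreover have "poly p x = poly 1 x" if "x \<in> A ` I" for x
  proof -
    obtain j where j: "j \<in> I" "x = A j" using \<open>x \<in> A ` I\<close> by blast
    have "poly p x = (\<Prod>i\<in>I-{j}. A i - A j) / (\<Prod>i\<in>I-{j}. A i - A j)"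
      unfolding poly_p j(2)
      by (rule sum.mono_neutral_right[OF fin, of "{j}", simplified])
         (use fin j in \<open>auto intro!: prod_zero\<close>)
    moreover have "(\<Prod>i\<in>I-{j}. A i - A j) \<noteq> 0"
      using fin inj j by (auto simp: inj_on_def)
    ultimately show ?thesis by simp
  qed
  moreover have "card (A ` I) = card I" "card I > 0"
    using card_image[OF inj] fin ne by (auto simp: card_gt_0_iff)
  ultimately have "p = 1"
    by (intro poly_eqI_degree[where A = "A ` I"]) auto
  then show ?thesis using poly_p[of z] by simp
qed

lemma inverse_prod_partial_fractions:
  fixes A :: "'i \<Rightarrow> 'a :: field"
  assumes fin: "finite I" and ne: "I \<noteq> {}" and inj: "inj_on A I" and z: "z \<notin> A ` I"
  shows "1 / (\<Prod>i\<in>I. A i - z) = (\<Sum>r\<in>I. 1 / ((\<Prod>i\<in>I-{r}. A i - A r) * (A r - z)))"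
proof -
  have nz: "A r - z \<noteq> 0" if "r \<in> I" for r using z that by auto
  then have P: "(\<Prod>i\<in>I. A i - z) \<noteq> 0" using fin by simp
  have "(\<Sum>r\<in>I. 1 / ((\<Prod>i\<in>I-{r}. A i - A r) * (A r - z))) * (\<Prod>i\<in>I. A i - z)
      = (\<Sum>r\<in>I. (\<Prod>i\<in>I-{r}. A i - z) / (\<Prod>i\<in>I-{r}. A i - A r))"
    unfolding sum_distrib_right
  proof (rule sum.cong[OF refl])
    fix r assume r: "r \<in> I"
    show "1 / ((\<Prod>i\<in>I-{r}. A i - A r) * (A r - z)) * (\<Prod>i\<in>I. A i - z)
        = (\<Prod>i\<in>I-{r}. A i - z) / (\<Prod>i\<in>I-{r}. A i - A r)"
      unfolding prod.remove[OF fin r] using nz[OF r] by simp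
  qed
  also have "\<dots> = 1" by (rule lagrange_basis_sum_eq_1[OF fin ne inj])
  finally show ?thesis using P by (simp add: field_simps)
qed

lemma has_contour_integral_div_prod_linear:
  fixes A :: "'i \<Rightarrow> complex"
  assumes fin: "finite I" and ne: "I \<noteq> {}" and inj: "inj_on A I"
    and S: "open S" and g: "g holomorphic_on S" and A_in: "A ` I \<subseteq> S"
    and \<gamma>: "valid_path \<gamma>" "pathfinish \<gamma> = pathstart \<gamma>" and img: "path_image \<gamma> \<subseteq> S - A ` I"
    and wn_A: "\<And>r. r \<in> I \<Longrightarrow> winding_number \<gamma> (A r) = 1"
    and wn_out: "\<And>w. w \<notin> S \<Longrightarrow> winding_number \<gamma> w = 0"
  shows "((\<lambda>z. g z / (\<Prod>i\<in>I. A i - z)) has_contour_integral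
           - (2 * pi * \<i>) * (\<Sum>r\<in>I. g (A r) / (\<Prod>i\<in>I-{r}. A i - A r))) \<gamma>"
proof -
  define c where "c r = 1 / (\<Prod>i\<in>I-{r}. A i - A r)" for r
  have "((\<lambda>z. c r * g z / (z - A r)) has_contour_integral (2 * pi * \<i> * (c r * g (A r)))) \<gamma>"
    if r: "r \<in> I" for r
  proof -
    have "((\<lambda>z. g z / (z - A r)) has_contour_integral (2 * pi * \<i> * g (A r))) \<gamma>"
      using Cauchy_integral_formula_global[OF S g _ \<gamma>(1) _ \<gamma>(2) wn_out, of "A r"]
        A_in img r wn_A[OF r] by auto
    from has_contour_integral_lmul[OF this, of "c r"] show ?thesis
      by (simp add: mult_ac)
  qed
  then have "((\<lambda>z. - (\<Sum>r\<in>I. c r * g z / (z - A r))) has_contour_integral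
               - (\<Sum>r\<in>I. 2 * pi * \<i> * (c r * g (A r)))) \<gamma>"
    by (intro has_contour_integral_neg has_contour_integral_sum fin)
  moreover have "- (\<Sum>r\<in>I. c r * g z / (z - A r)) = g z / (\<Prod>i\<in>I. A i - z)"
    if "z \<in> path_image \<gamma>" for z
  proof -
    have "z \<notin> A ` I" using img that by auto
    have "- (c r * g z / (z - A r)) = g z * (1 / ((\<Prod>i\<in>I-{r}. A i - A r) * (A r - z)))"
      for r
      by (simp add: c_def) (metis minus_diff_eq mult_minus_right divide_minus_right)
    then have "- (\<Sum>r\<in>I. c r * g z / (z - A r))
        = g z * (\<Sum>r\<in>I. 1 / ((\<Prod>i\<in>I-{r}. A i - A r) * (A r - z)))"
      by (simp add: sum_distrib_left sum_negf[symmetric])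
    also have "\<dots> = g z / (\<Prod>i\<in>I. A i - z)"
      unfolding inverse_prod_partial_fractions[OF fin ne inj \<open>z \<notin> A ` I\<close>, symmetric] by simp
    finally show ?thesis .
  qed
  ultimately have "((\<lambda>z. g z / (\<Prod>i\<in>I. A i - z)) has_contour_integral
               - (\<Sum>r\<in>I. 2 * pi * \<i> * (c r * g (A r)))) \<gamma>"
    by (rule has_contour_integral_eq)
  then show ?thesis
    by (simp add: c_def sum_distrib_left sum_negf)
qed

lemma Gprod_fun_upd:
  assumes "r \<in> {1..N}"
  shows "Gprod f N (A(r := x)) nu = f x * (\<Prod>i\<in>{1..N}-{r}. f (A i))"
  unfolding Gprod_def prod.remove[OF finite_atLeastAtMost assms] by simp

lemma D_op_Gprod_div_Gprod:
  assumes nz: "\<And>i. i \<in> {1..N} \<Longrightarrow> f (A i) \<noteq> 0"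
  shows "D_op q N (Gprod f N) A nu / Gprod f N A nu
       = (\<Sum>r\<in>{1..N}. (1 - nu r) * (\<Prod>i\<in>{1..N}-{r}. (A i - nu i * A r) / (A i - A r))
                        * f (q * A r) / f (A r))"
  unfolding D_op_def qshift_a_def qshift_nu_def sum_divide_distrib
proof (rule sum.cong[OF refl])
  fix r assume r: "r \<in> {1..N}"
  have "Gprod f N A nu = f (A r) * (\<Prod>i\<in>{1..N}-{r}. f (A i))"
    using Gprod_fun_upd[OF r, of f A "A r"] by simp
  moreover have "(\<Prod>i\<in>{1..N}-{r}. f (A i)) \<noteq> 0" using nz by auto
  ultimately show "(1 - nu r) * (\<Prod>i\<in>{1..N}-{r}. (A i - nu i * A r) / (A i - A r))
        * Gprod f N (A(r := q * A r)) (nu(r := q * nu r)) / Gprod f N A nu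
      = (1 - nu r) * (\<Prod>i\<in>{1..N}-{r}. (A i - nu i * A r) / (A i - A r)) * f (q * A r) / f (A r)"
    unfolding Gprod_fun_upd[OF r] by simp
qed

lemma D_op_Gprod_eq_contour_integral:
  fixes A nu :: "nat \<Rightarrow> complex" and q :: complex
  assumes N: "N \<ge> 1" and inj: "inj_on A {1..N}"
    and S: "open S" "0 \<notin> S" and A_in: "A ` {1..N} \<subseteq> S"
    and f: "f holomorphic_on S" "(\<lambda>z. f (q * z)) holomorphic_on S" "\<And>z. z \<in> S \<Longrightarrow> f z \<noteq> 0"
    and \<gamma>: "valid_path \<gamma>" "pathfinish \<gamma> = pathstart \<gamma>" "path_image \<gamma> \<subseteq> S - A ` {1..N}"
    and wn_A: "\<And>r. r \<in> {1..N} \<Longrightarrow> winding_number \<gamma> (A r) = 1"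
    and wn_out: "\<And>w. w \<notin> S \<Longrightarrow> winding_number \<gamma> w = 0"
  shows "D_op q N (Gprod f N) A nu / Gprod f N A nu
       = - (1 / (2 * complex_of_real pi * \<i>)) * contour_integral \<gamma>
             (\<lambda>z. (\<Prod>i\<in>{1..N}. (A i - nu i * z) / (A i - z)) * f (q * z) / f z / z)"
proof -
  define g where "g z = (\<Prod>i\<in>{1..N}. A i - nu i * z) * f (q * z) / f z / z" for z
  have g_residue: "g (A r) / (\<Prod>i\<in>{1..N}-{r}. A i - A r)
      = (1 - nu r) * (\<Prod>i\<in>{1..N}-{r}. (A i - nu i * A r) / (A i - A r)) * f (q * A r) / f (A r)"
    if r: "r \<in> {1..N}" for r
  proof -
    have "A r \<noteq> 0" using A_in S(2) r by force
    then show ?thesis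
      unfolding g_def prod.remove[OF finite_atLeastAtMost r] prod_dividef
      by (simp add: field_simps) (simp add: right_diff_distrib[symmetric])
  qed
  have "g holomorphic_on S"
    unfolding g_def using S(2) f by (intro holomorphic_intros) auto
  from has_contour_integral_div_prod_linear[OF _ _ inj S(1) this A_in \<gamma> wn_A wn_out] N
  have g_integral: "contour_integral \<gamma> (\<lambda>z. g z / (\<Prod>i\<in>{1..N}. A i - z))
      = - (2 * pi * \<i>) * (\<Sum>r\<in>{1..N}. g (A r) / (\<Prod>i\<in>{1..N}-{r}. A i - A r))"
    by (auto intro: contour_integral_unique)
  have "D_op q N (Gprod f N) A nu / Gprod f N A nu
      = (\<Sum>r\<in>{1..N}. (1 - nu r) * (\<Prod>i\<in>{1..N}-{r}. (A i - nu i * A r) / (A i - A r))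
                        * f (q * A r) / f (A r))"
    using A_in f(3) by (intro D_op_Gprod_div_Gprod) force
  also have "\<dots> = (\<Sum>r\<in>{1..N}. g (A r) / (\<Prod>i\<in>{1..N}-{r}. A i - A r))"
    by (intro sum.cong refl) (rule g_residue[symmetric])
  also have "\<dots> = - (1 / (2 * complex_of_real pi * \<i>))
      * contour_integral \<gamma> (\<lambda>z. g z / (\<Prod>i\<in>{1..N}. A i - z))"
    unfolding g_integral by simp
  also have "(\<lambda>z. g z / (\<Prod>i\<in>{1..N}. A i - z))
      = (\<lambda>z. (\<Prod>i\<in>{1..N}. (A i - nu i * z) / (A i - z)) * f (q * z) / f z / z)"
    by (simp add: g_def prod_dividef mult_ac)
  finally show ?thesis .
qed

theorem lemma4p2:
  fixes N :: nat and q :: real and a :: "nat \<Rightarrow> real" and nu :: "nat \<Rightarrow> complex"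
    and f :: "complex \<Rightarrow> complex" and U :: "complex set" and c d :: real
    and \<gamma> :: "real \<Rightarrow> complex"
  assumes N: "N \<ge> 1"
    and q: "0 < q" "q < 1"
    and sign: "(\<forall>i\<in>{1..N}. a i > 0) \<or> (\<forall>i\<in>{1..N}. a i < 0)"
    and distinct: "inj_on a {1..N}"
    and U_open: "open U"
    and interval: "\<forall>i\<in>{1..N}. a i \<in> {c..d} \<and> q * a i \<in> {c..d}"
    and interval_U: "complex_of_real ` {c..d} \<subseteq> U"
    and f_hol: "f holomorphic_on U"
    and f_nz: "\<forall>w\<in>U. f w \<noteq> 0"
    and \<gamma>_path: "valid_path \<gamma>" "pathfinish \<gamma> = pathstart \<gamma>"
    and \<gamma>_img: "\<forall>z\<in>path_image \<gamma>. z \<in> U \<and> complex_of_real q * z \<in> U \<and> z \<noteq> 0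
                    \<and> (\<forall>i\<in>{1..N}. z \<noteq> complex_of_real (a i))"
    and \<gamma>_encircles: "\<forall>i\<in>{1..N}. winding_number \<gamma> (complex_of_real (a i)) = 1"
    and \<gamma>_no_other: "\<forall>w. w \<notin> path_image \<gamma> \<and> winding_number \<gamma> w \<noteq> 0
                    \<and> (\<forall>i\<in>{1..N}. w \<noteq> complex_of_real (a i))
                    \<longrightarrow> w \<in> U \<and> complex_of_real q * w \<in> U \<and> w \<noteq> 0"
  shows "D_op (complex_of_real q) N (Gprod f N) (\<lambda>i. complex_of_real (a i)) nu
           / Gprod f N (\<lambda>i. complex_of_real (a i)) nu
         = - (1 / (2 * complex_of_real pi * \<i>)) *
           contour_integral \<gamma>
             (\<lambda>z. (\<Prod>i\<in>{1..N}. (complex_of_real (a i) - nu i * z) / (complex_of_real (a i) - z))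
                  * f (complex_of_real q * z) / f z / z)"
proof -
  define Q where "Q = complex_of_real q"
  define A where "A i = complex_of_real (a i)" for i
  define S where "S = U \<inter> (*) Q -` U - {0}"
  have "open S"
    unfolding S_def by (intro open_Diff open_Int U_open continuous_open_vimage continuous_intros)
  have A_in: "A ` {1..N} \<subseteq> S"
  proof
    fix w assume "w \<in> A ` {1..N}"
    then obtain r where r: "r \<in> {1..N}" "w = A r" by blast
    then have "a r \<noteq> 0" using sign by fastforce
    moreover have "of_real (a r) \<in> U" "of_real (q * a r) \<in> U" using interval interval_U r by blast+
    ultimately show "w \<in> S" by (simp add: S_def Q_def A_def r(2))
  qed
  have f_Q_hol: "(\<lambda>z. f (Q * z)) holomorphic_on S"
    using holomorphic_on_compose_gen[of "(*) Q" S f U] f_hol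
    by (auto simp: S_def o_def intro: holomorphic_intros)
  have f_S_hol: "f holomorphic_on S" using f_hol by (rule holomorphic_on_subset) (auto simp: S_def)
  have path: "path_image \<gamma> \<subseteq> S - A ` {1..N}"
    using \<gamma>_img by (auto simp: S_def Q_def A_def)
  have wn_out: "winding_number \<gamma> w = 0" if "w \<notin> S" for w
  proof (rule ccontr)
    assume "winding_number \<gamma> w \<noteq> 0"
    moreover have "w \<notin> path_image \<gamma>" "\<forall>i\<in>{1..N}. w \<noteq> complex_of_real (a i)"
      using path A_in that by (auto simp: A_def)
    ultimately have "w \<in> S" using \<gamma>_no_other by (simp add: S_def Q_def)
    with that show False ..
  qed
  have inj: "inj_on A {1..N}"
    using distinct unfolding inj_on_def A_def of_real_eq_iff .
  have S_nz: "0 \<notin> S" "\<And>z. z \<in> S \<Longrightarrow> f z \<noteq> 0" using f_nz by (auto simp: S_def)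
  have wn_A: "\<And>r. r \<in> {1..N} \<Longrightarrow> winding_number \<gamma> (A r) = 1"
    using \<gamma>_encircles by (simp add: A_def)
  have "D_op Q N (Gprod f N) A nu / Gprod f N A nu
       = - (1 / (2 * complex_of_real pi * \<i>)) * contour_integral \<gamma>
             (\<lambda>z. (\<Prod>i\<in>{1..N}. (A i - nu i * z) / (A i - z)) * f (Q * z) / f z / z)"
    by (rule D_op_Gprod_eq_contour_integral[OF N inj \<open>open S\<close> S_nz(1) A_in f_S_hol f_Q_hol S_nz(2)
          \<gamma>_path path wn_A wn_out])
  then show ?thesis by (simp only: Q_def A_def[abs_def])
qed

end
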